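(* Let $k$, $\underline{F_\rho}$ and $\rho_0$ be as in the context. For every $\rho\in(0,\rho_0)$ there exist $\lambda_\rho^+>0$, $\lambda_\rho^-<0$ and $u_\rho^+,u_\rho^-\in C[0,1]$ with $\|u_\rho^\pm\|_\infty=\rho$ such that $(\lambda,u)=(\lambda_\rho^\pm,u_\rho^\pm)$ solves \[ u(t)=\lambda\int_0^1 k(t,s)\,\frac{\sin\!\big(\tfrac32\pi s\big)e^{u(s)}}{\int_0^1 e^{u(x)}\,dx}\,ds,\qquad t\in[0,1], \] equivalently the Neumann problem $-u''(t)+u(t)=\lambda\,\sin(\tfrac32\pi t)e^{u(t)}/\int_0^1e^{u(x)}dx$ on $(0,1)$, $u'(0)=u'(1)=0$. Moreover, every pair $(\lambda,u)\in\mathbb{R}\times C[0,1]$ with $\|u\|_\infty=\rho$ solving this integral equation satisfies $|\lambda|\le \rho\big/\max_{[0,1]}\underline{F_\rho}$.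
   Context: $k(t,s)=\frac{1}{\sinh 1}\cosh(1-s)\cosh(t)$ for $0\le t\le s\le1$ and $k(t,s)=\frac{1}{\sinh 1}\cosh(1-t)\cosh(s)$ for $0\le s\le t\le 1$. For $\rho>0$, $\underline{F_\rho}(t)=e^{-2\rho}\int_0^{2/3}k(t,s)\sin(\frac32\pi s)\,ds+e^{2\rho}\int_{2/3}^1k(t,s)\sin(\frac32\pi s)\,ds$. With $b=3\pi/2$, $q=1/[(1+b^2)\sinh 1]$, $\mathcal{A}(t)=q\sin(bt)\sinh 1+qb(\cosh(1-t)+\cosh(\frac13)\cosh t)$, $\mathcal{B}(t)=-qb\cosh(\frac13)\cosh t$, $\mathcal{C}(t)=qb(\cosh(\frac23)+1)\cosh(1-t)$, $\mathcal{D}(t)=q(\sinh(1)\sin(bt)-b\cosh(\frac23)\cosh(1-t))$, define $\rho_1=\frac14\log\max_{[0,2/3]}(-\mathcal{A}/\mathcal{B})$, $\rho_2=\frac14\log\max_{[2/3,1]}(-\mathcal{C}/\mathcal{D})$, $\rho_0=\max\{\rho_1,\rho_2\}$. *)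

theory Defs
  imports "HOL-Analysis.Analysis"
begin

text \<open>Green's function of the Neumann problem -u''+u = f, u'(0)=u'(1)=0.\<close>
definition kern :: "real \<Rightarrow> real \<Rightarrow> real" where
  "kern t s = (if t \<le> s then cosh (1 - s) * cosh t / sinh 1
               else cosh (1 - t) * cosh s / sinh 1)"

definition bb :: real where "bb = 3 * pi / 2"

definition qq :: real where "qq = 1 / ((1 + bb^2) * sinh 1)"

definition FF :: "real \<Rightarrow> real \<Rightarrow> real" where
  "FF \<rho> t = exp (-2*\<rho>) * integral {0..2/3} (\<lambda>s. kern t s * sin (3/2 * pi * s))
          + exp (2*\<rho>) * integral {2/3..1} (\<lambda>s. kern t s * sin (3/2 * pi * s))"

definition AA :: "real \<Rightarrow> real" where
  "AA t = qq * sin (bb*t) * sinh 1 + qq * bb * (cosh (1 - t) + cosh (1/3) * cosh t)"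
definition BB :: "real \<Rightarrow> real" where
  "BB t = - qq * bb * cosh (1/3) * cosh t"
definition CC :: "real \<Rightarrow> real" where
  "CC t = qq * bb * (cosh (2/3) + 1) * cosh (1 - t)"
definition DD :: "real \<Rightarrow> real" where
  "DD t = qq * (sinh 1 * sin (bb*t) - bb * cosh (2/3) * cosh (1 - t))"

definition rho1 :: real where
  "rho1 = ln (SUP t\<in>{0..2/3}. - AA t / BB t) / 4"
definition rho2 :: real where
  "rho2 = ln (SUP t\<in>{2/3..1}. - CC t / DD t) / 4"
definition rho0 :: real where
  "rho0 = max rho1 rho2"

definition supnorm :: "(real \<Rightarrow> real) \<Rightarrow> real" where
  "supnorm u = (SUP t\<in>{0..1}. \<bar>u t\<bar>)"

definition solves :: "real \<Rightarrow> (real \<Rightarrow> real) \<Rightarrow> bool" where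
  "solves lam u \<longleftrightarrow> (\<forall>t\<in>{0..1}. u t = lam * integral {0..1}
      (\<lambda>s. kern t s * (sin (3/2 * pi * s) * exp (u s) / integral {0..1} (\<lambda>x. exp (u x)))))"

end

theory Submission
  imports Defs "HOL-Homology.Homology"
begin

(* For u in the ball of radius rho of C[0,1], the density exp u / (integral of exp u) lies
   between exp (-2 rho) and exp (2 rho), and the weight sin (3 pi s / 2) is positive on (0, 2/3)
   and negative on (2/3, 1).  Hence the right-hand side green_op u of the integral equation is
   bounded below by F_rho pointwise.  This gives the bound on |lambda|, and for rho < rho0 the
   closed form of F_rho shows that F_rho is positive somewhere, so that ||green_op u|| is bounded
   away from 0 on the ball.  Then u |-> +-rho green_op u / ||green_op u|| is a compact self-map
   of the ball, and a Schauder fixed point u solves the equation with lambda = +-rho / ||green_op u||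
   and ||u|| = rho.  Schauder's theorem is obtained from Brouwer's theorem via piecewise linear
   approximation and Arzela-Ascoli; Brouwer's theorem for cubes of any dimension follows from the
   non-contractibility of spheres. *)

section \<open>Brouwer's fixed point theorem for cubes\<close>

(* As in Euclidean_space and nsphere, R^(n+1) is modelled by the functions nat => real
   vanishing beyond n. *)

definition supported_vecs :: "nat \<Rightarrow> (nat \<Rightarrow> real) set" where
  "supported_vecs n = {x. \<forall>i>n. x i = 0}"

definition unit_sphere :: "nat \<Rightarrow> (nat \<Rightarrow> real) set" where
  "unit_sphere n = {x. (\<Sum>i\<le>n. (x i)\<^sup>2) = 1 \<and> (\<forall>i>n. x i = 0)}"

definition sphere_normalize :: "nat \<Rightarrow> (nat \<Rightarrow> real) \<Rightarrow> nat \<Rightarrow> real" where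
  "sphere_normalize n y = (\<lambda>i. if i \<le> n then y i / sqrt (\<Sum>j\<le>n. (y j)\<^sup>2) else 0)"

lemma nsphere_eq_top_of_set: "nsphere n = top_of_set (unit_sphere n)"
  by (simp add: nsphere unit_sphere_def euclidean_product_topology)

lemma Euclidean_space_Suc_eq_top_of_set: "Euclidean_space (Suc n) = top_of_set (supported_vecs n)"
  by (simp add: Euclidean_space_def supported_vecs_def euclidean_product_topology Suc_le_eq)

lemma continuous_on_coordinate: "continuous_on A (\<lambda>x :: 'i \<Rightarrow> real. x i)"
  by (rule continuous_on_subset[OF continuous_on_product_coordinates]) simp

lemma sum_squares_pos:
  assumes "y \<in> supported_vecs n" and "y \<noteq> (\<lambda>_. 0)"
  shows "(\<Sum>i\<le>n. (y i)\<^sup>2) > 0"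
proof -
  from assms(2) obtain i where "y i \<noteq> 0"
    by (auto simp: fun_eq_iff)
  moreover from this have "i \<le> n"
    using assms(1) not_le by (auto simp: supported_vecs_def)
  ultimately have "(\<Sum>i\<le>n. (y i)\<^sup>2) \<noteq> 0"
    by (subst sum_nonneg_eq_0_iff) auto
  then show ?thesis
    by (simp add: sum_nonneg order_less_le)
qed

lemma sphere_normalize_in_unit_sphere:
  assumes "y \<in> supported_vecs n" and "y \<noteq> (\<lambda>_. 0)"
  shows "sphere_normalize n y \<in> unit_sphere n"
proof -
  have "(\<Sum>i\<le>n. (sphere_normalize n y i)\<^sup>2) = (\<Sum>i\<le>n. (y i)\<^sup>2) / (sqrt (\<Sum>j\<le>n. (y j)\<^sup>2))\<^sup>2"
    by (simp add: sphere_normalize_def power_divide sum_divide_distrib)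
  also have "\<dots> = 1"
    using sum_squares_pos[OF assms] by simp
  finally show ?thesis
    by (simp add: unit_sphere_def sphere_normalize_def)
qed

lemma sphere_normalize_scale:
  assumes "x \<in> unit_sphere n" and "\<Lambda> > 0"
  shows "sphere_normalize n (\<lambda>i. \<Lambda> * x i) = x"
proof -
  have "sqrt (\<Sum>j\<le>n. (\<Lambda> * x j)\<^sup>2) = \<Lambda>"
    using assms by (simp add: unit_sphere_def power_mult_distrib flip: sum_distrib_left)
  then show ?thesis
    using assms by (auto simp: sphere_normalize_def unit_sphere_def fun_eq_iff)
qed

lemma continuous_on_sphere_normalize:
  assumes "continuous_on A h" and "\<And>p. p \<in> A \<Longrightarrow> h p \<in> supported_vecs n \<and> h p \<noteq> (\<lambda>_. 0)"
  shows "continuous_on A (\<lambda>p. sphere_normalize n (h p))"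
proof (unfold sphere_normalize_def, rule continuous_on_coordinatewise_then_product)
  have cont_h: "continuous_on A (\<lambda>p. h p i)" for i
    by (rule continuous_on_product_then_coordinatewise[OF assms(1)])
  have "continuous_on A (\<lambda>p. sqrt (\<Sum>j\<le>n. (h p j)\<^sup>2))"
    by (intro continuous_intros cont_h)
  moreover have "sqrt (\<Sum>j\<le>n. (h p j)\<^sup>2) \<noteq> 0" if "p \<in> A" for p
    using sum_squares_pos[of "h p" n] assms(2)[OF that] by simp
  ultimately show "continuous_on A (\<lambda>p. if i \<le> n then h p i / sqrt (\<Sum>j\<le>n. (h p j)\<^sup>2) else 0)" for i
    by (cases "i \<le> n") (auto intro!: continuous_on_divide cont_h)
qed

(* A zero-free g would make sphere_normalize n o g a contraction of the sphere: it is defined on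
   the contractible space R^(n+1), and on the sphere of radius Lambda it is homotopic to the identity. *)
lemma nonvanishing_map_not_homotopic_to_id:
  fixes g :: "(nat \<Rightarrow> real) \<Rightarrow> nat \<Rightarrow> real"
  assumes cont_g: "continuous_on (supported_vecs n) g" and g_E: "g ` supported_vecs n \<subseteq> supported_vecs n"
    and g_nz: "\<And>x. x \<in> supported_vecs n \<Longrightarrow> g x \<noteq> (\<lambda>_. 0)" and \<Lambda>: "\<Lambda> > 0"
    and H_nz: "\<And>x t. x \<in> unit_sphere n \<Longrightarrow> t \<in> {0..1} \<Longrightarrow>
                 (\<lambda>i. (1 - t) * (\<Lambda> * x i) + t * g (\<lambda>j. \<Lambda> * x j) i) \<noteq> (\<lambda>_. 0)"
  shows False
proof -
  define S where "S = unit_sphere n"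
  define j where "j x = (\<lambda>i. \<Lambda> * x i)" for x :: "nat \<Rightarrow> real"
  define H where "H p = (\<lambda>i. (1 - fst p) * j (snd p) i + fst p * g (j (snd p)) i)"
    for p :: "real \<times> (nat \<Rightarrow> real)"
  have j_E: "j x \<in> supported_vecs n" if "x \<in> S" for x
    using that by (simp add: S_def j_def unit_sphere_def supported_vecs_def)
  have cont_j: "continuous_on A j" for A
    unfolding j_def by (intro continuous_on_coordinatewise_then_product continuous_on_mult continuous_on_const
        continuous_on_coordinate)
  have H_E: "H p \<in> supported_vecs n \<and> H p \<noteq> (\<lambda>_. 0)" if p_in: "p \<in> {0..1} \<times> S" for p
  proof -
    obtain t x where p: "p = (t, x)" and t: "t \<in> {0..1}" and x: "x \<in> S"
      using p_in by auto
    have "j x \<in> supported_vecs n" "g (j x) \<in> supported_vecs n"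
      using j_E g_E x by auto
    then have "H p \<in> supported_vecs n"
      by (simp add: H_def p supported_vecs_def)
    moreover have "H p \<noteq> (\<lambda>_. 0)"
      using H_nz[of x t] x t by (simp add: H_def p j_def S_def)
    ultimately show ?thesis ..
  qed
  have cont_gj: "continuous_on ({0..1} \<times> S) (\<lambda>p. g (j (snd p)))"
    using j_E by (intro continuous_on_compose2[OF cont_g continuous_on_compose2[OF cont_j continuous_on_snd]]
        continuous_on_id) auto
  have cont_H: "continuous_on ({0..1} \<times> S) H"
    unfolding H_def
    by (intro continuous_on_coordinatewise_then_product continuous_on_add continuous_on_mult continuous_on_diff
        continuous_on_const continuous_on_fst[OF continuous_on_id] continuous_on_product_then_coordinatewise[OF cont_gj]
        continuous_on_product_then_coordinatewise[OF continuous_on_compose2[OF cont_j continuous_on_snd[OF continuous_on_id]]])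
      auto
  have "contractible_space (top_of_set S)"
  proof (rule homotopy_dominated_contractibility)
    have "continuous_on (supported_vecs n) (\<lambda>x. sphere_normalize n (g x))"
      by (rule continuous_on_sphere_normalize[OF cont_g]) (use g_E g_nz in auto)
    moreover have "sphere_normalize n (g x) \<in> S" if "x \<in> supported_vecs n" for x
      using sphere_normalize_in_unit_sphere g_E g_nz that by (auto simp: S_def)
    ultimately show "continuous_map (top_of_set (supported_vecs n)) (top_of_set S) (\<lambda>x. sphere_normalize n (g x))"
      by auto
    show "continuous_map (top_of_set S) (top_of_set (supported_vecs n)) j"
      using j_E cont_j by auto
    show "contractible_space (top_of_set (supported_vecs n))"
      using contractible_Euclidean_space[of "Suc n"] by (simp add: Euclidean_space_Suc_eq_top_of_set)
    have "homotopic_with (\<lambda>_. True) (top_of_set S) (top_of_set S) id (\<lambda>x. sphere_normalize n (g (j x)))"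
    proof (subst homotopic_with, simp, intro exI conjI)
      have "continuous_on ({0..1} \<times> S) (\<lambda>p. sphere_normalize n (H p))"
        by (rule continuous_on_sphere_normalize[OF cont_H H_E])
      moreover have "(\<lambda>p. sphere_normalize n (H p)) \<in> {0..1} \<times> S \<rightarrow> S"
        using H_E sphere_normalize_in_unit_sphere by (auto simp: S_def)
      ultimately show "continuous_map (prod_topology (top_of_set {0..1}) (top_of_set S)) (top_of_set S)
          (\<lambda>p. sphere_normalize n (H p))"
        unfolding prod_topology_subtopology_eu continuous_map_subtopology_eu by blast
    qed (auto simp: H_def S_def j_def sphere_normalize_scale \<Lambda>)
    then show "homotopic_with (\<lambda>_. True) (top_of_set S) (top_of_set S)
        ((\<lambda>x. sphere_normalize n (g x)) \<circ> j) id"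
      by (simp add: homotopic_with_sym o_def)
  qed
  then show False
    using non_contractible_space_nsphere[of n] by (simp add: nsphere_eq_top_of_set S_def)
qed

definition ncube :: "nat \<Rightarrow> real \<Rightarrow> (nat \<Rightarrow> real) set" where
  "ncube n r = {x. (\<forall>i\<le>n. \<bar>x i\<bar> \<le> r) \<and> (\<forall>i>n. x i = 0)}"

lemma ncube_sum_squares_le:
  assumes "x \<in> ncube n r"
  shows "(\<Sum>i\<le>n. (x i)\<^sup>2) \<le> (real n + 1) * r\<^sup>2"
proof -
  have "(\<Sum>i\<le>n. (x i)\<^sup>2) \<le> (\<Sum>i\<le>n. r\<^sup>2)"
    using assms power_mono[of "\<bar>x _\<bar>" r 2] by (intro sum_mono) (auto simp: ncube_def)
  then show ?thesis by (simp add: add.commute)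
qed

lemma scaled_unit_sphere_disjoint_ncube:
  assumes x: "x \<in> unit_sphere n" and y: "y \<in> ncube n r" and r: "r > 0" and t: "t \<in> {0..1}"
  shows "(\<lambda>i. r * (real n + 2) * x i) \<noteq> (\<lambda>i. t * y i)"
proof
  define \<Lambda> where "\<Lambda> = r * (real n + 2)"
  assume "(\<lambda>i. r * (real n + 2) * x i) = (\<lambda>i. t * y i)"
  then have eq: "\<Lambda> * x i = t * y i" for i
    by (simp add: \<Lambda>_def fun_eq_iff)
  have "\<Lambda>\<^sup>2 = (\<Sum>i\<le>n. (\<Lambda> * x i)\<^sup>2)"
    using x by (simp add: unit_sphere_def power_mult_distrib flip: sum_distrib_left)
  also have "\<dots> = t\<^sup>2 * (\<Sum>i\<le>n. (y i)\<^sup>2)"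
    by (simp add: eq power_mult_distrib sum_distrib_left)
  also have "\<dots> \<le> 1 * ((real n + 1) * r\<^sup>2)"
    using t ncube_sum_squares_le[OF y] by (intro mult_mono) (auto simp: power_le_one sum_nonneg)
  also have "\<dots> < \<Lambda>\<^sup>2"
  proof -
    have "(real n + 2)\<^sup>2 = (real n + 1) + ((real n)\<^sup>2 + 3 * real n + 3)"
      by (simp add: power2_eq_square algebra_simps)
    then have "real n + 1 < (real n + 2)\<^sup>2"
      using zero_le_power2[of "real n"] by linarith
    then show ?thesis
      using r by (simp add: \<Lambda>_def power_mult_distrib)
  qed
  finally show False by simp
qed

(* If f had no fixed point, x - f (clamp x) would have no zero (clamp retracts onto the cube),
   and on the sphere of radius r (n + 2), which lies outside the cube, neither would the straight
   line homotopy to the identity. *)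
lemma ncube_fixpoint:
  fixes f :: "(nat \<Rightarrow> real) \<Rightarrow> nat \<Rightarrow> real"
  assumes r: "r > 0" and cont_f: "continuous_on (ncube n r) f" and f_Q: "f ` ncube n r \<subseteq> ncube n r"
  shows "\<exists>x\<in>ncube n r. f x = x"
proof (rule ccontr)
  assume no_fix: "\<not> ?thesis"
  define clamp where "clamp x = (\<lambda>i. if i \<le> n then max (-r) (min r (x i)) else 0)" for x :: "nat \<Rightarrow> real"
  define g where "g x = (\<lambda>i. x i - f (clamp x) i)" for x
  have clamp_Q: "clamp x \<in> ncube n r" for x
    using r by (auto simp: clamp_def ncube_def)
  have fQ: "f (clamp x) \<in> ncube n r" for x
    using f_Q clamp_Q by blast
  have clamp_id: "clamp x = x" if "x \<in> ncube n r" for x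
    using that by (auto simp: clamp_def ncube_def fun_eq_iff abs_le_iff)
  have "continuous_on A clamp" for A
  proof (rule continuous_on_coordinatewise_then_product)
    show "continuous_on A (\<lambda>x. clamp x i)" for i
      by (cases "i \<le> n") (auto simp: clamp_def intro!: continuous_intros continuous_on_coordinate)
  qed
  then have cont_fc: "continuous_on A (\<lambda>x. f (clamp x))" for A
    using clamp_Q by (blast intro: continuous_on_compose2[OF cont_f])
  show False
  proof (rule nonvanishing_map_not_homotopic_to_id)
    show "continuous_on (supported_vecs n) g"
      unfolding g_def
      by (intro continuous_on_coordinatewise_then_product continuous_on_diff continuous_on_coordinate
          continuous_on_product_then_coordinatewise[OF cont_fc])
    show "g ` supported_vecs n \<subseteq> supported_vecs n"
      using fQ by (auto simp: g_def ncube_def supported_vecs_def)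
    show "g x \<noteq> (\<lambda>_. 0)" if "x \<in> supported_vecs n" for x
    proof
      assume "g x = (\<lambda>_. 0)"
      then have "x = f (clamp x)"
        by (auto simp: g_def fun_eq_iff)
      then show False
        using no_fix fQ clamp_id by metis
    qed
    show "r * (real n + 2) > 0"
      using r by simp
    show "(\<lambda>i. (1 - t) * (r * (real n + 2) * x i) + t * g (\<lambda>j. r * (real n + 2) * x j) i) \<noteq> (\<lambda>_. 0)"
      if x: "x \<in> unit_sphere n" and t: "t \<in> {0..1}" for x t
    proof
      define \<Lambda> where "\<Lambda> = r * (real n + 2)"
      define y where "y = f (clamp (\<lambda>j. \<Lambda> * x j))"
      assume "(\<lambda>i. (1 - t) * (r * (real n + 2) * x i) + t * g (\<lambda>j. r * (real n + 2) * x j) i) = (\<lambda>_. 0)"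
      then have zero: "(1 - t) * (\<Lambda> * x i) + t * (\<Lambda> * x i - y i) = 0" for i
        unfolding g_def y_def \<Lambda>_def by (rule fun_cong)
      have expand: "(1 - t) * (\<Lambda> * x i) + t * (\<Lambda> * x i - y i) = \<Lambda> * x i - t * y i" for i
        by (simp add: algebra_simps)
      have "\<Lambda> * x i = t * y i" for i
        using zero[of i] expand[of i] by linarith
      then have "(\<lambda>i. \<Lambda> * x i) = (\<lambda>i. t * y i)"
        by (rule ext)
      moreover have "(\<lambda>i. \<Lambda> * x i) \<noteq> (\<lambda>i. t * y i)"
        unfolding \<Lambda>_def y_def by (rule scaled_unit_sphere_disjoint_ncube[OF x fQ r t])
      ultimately show False
        by contradiction
    qed
  qed
qed

section \<open>A Schauder-type fixed point theorem in C[0, 1]\<close>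

definition cont_ball :: "real \<Rightarrow> (real \<Rightarrow> real) set" where
  "cont_ball r = {u. continuous_on {0..1} u \<and> (\<forall>t\<in>{0..1}. \<bar>u t\<bar> \<le> r)}"

lemma cont_ballD:
  assumes "u \<in> cont_ball r"
  shows "continuous_on {0..1} u" and "t \<in> {0..1} \<Longrightarrow> \<bar>u t\<bar> \<le> r"
  using assms by (auto simp: cont_ball_def)

definition hat :: "real \<Rightarrow> nat \<Rightarrow> real" where
  "hat x j = max 0 (1 - \<bar>x - real j\<bar>)"

lemma hat_nonneg: "hat x j \<ge> 0"
  by (simp add: hat_def)

lemma hat_le_one: "hat x j \<le> 1"
  by (simp add: hat_def)

lemma hat_eq_0: "1 \<le> \<bar>x - real j\<bar> \<Longrightarrow> hat x j = 0"
  by (simp add: hat_def)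

lemma sum_hat: "x \<in> {0..real n} \<Longrightarrow> (\<Sum>j\<le>n. hat x j) = 1"
proof (induction n)
  case 0
  then show ?case by (simp add: hat_def)
next
  case (Suc n)
  show ?case
  proof (cases "x \<le> real n")
    case True
    then show ?thesis using Suc by (simp add: hat_eq_0)
  next
    case False
    have "(\<Sum>j<n. hat x j) = 0"
      using False by (intro sum.neutral) (auto simp: hat_eq_0)
    moreover have "hat x n = 1 - (x - real n)" "hat x (Suc n) = x - real n"
      using False Suc.prems by (auto simp: hat_def)
    ultimately show ?thesis by (simp add: lessThan_Suc_atMost[symmetric])
  qed
qed

lemma continuous_on_hat: "continuous_on A (\<lambda>t. hat (a * t) j)"
  unfolding hat_def by (intro continuous_intros)

definition interp :: "nat \<Rightarrow> (nat \<Rightarrow> real) \<Rightarrow> real \<Rightarrow> real" where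
  "interp n c t = (\<Sum>j\<le>n. c j * hat (real n * t) j)"

lemma sum_hat_nodes: "t \<in> {0..1} \<Longrightarrow> (\<Sum>j\<le>n. hat (real n * t) j) = 1"
  by (rule sum_hat) (auto intro: mult_left_le)

lemma interp_in_cont_ball:
  assumes "c \<in> ncube n r"
  shows "interp n c \<in> cont_ball r"
proof -
  have "\<bar>interp n c t\<bar> \<le> r" if t: "t \<in> {0..1}" for t
  proof -
    have "\<bar>interp n c t\<bar> \<le> (\<Sum>j\<le>n. \<bar>c j * hat (real n * t) j\<bar>)"
      unfolding interp_def by (rule sum_abs)
    also have "\<dots> = (\<Sum>j\<le>n. \<bar>c j\<bar> * hat (real n * t) j)"
      by (simp add: abs_mult hat_nonneg)
    also have "\<dots> \<le> (\<Sum>j\<le>n. r * hat (real n * t) j)"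
      using assms by (intro sum_mono mult_right_mono hat_nonneg) (auto simp: ncube_def)
    also have "\<dots> = r"
      using sum_hat_nodes[OF t] by (simp flip: sum_distrib_left)
    finally show ?thesis .
  qed
  moreover have "continuous_on {0..1} (interp n c)"
    unfolding interp_def by (intro continuous_intros continuous_on_hat)
  ultimately show ?thesis by (simp add: cont_ball_def)
qed

lemma interp_diff_le: "\<bar>interp n c t - interp n c' t\<bar> \<le> (\<Sum>i\<le>n. \<bar>c i - c' i\<bar>)"
proof -
  have "\<bar>interp n c t - interp n c' t\<bar> = \<bar>\<Sum>j\<le>n. (c j - c' j) * hat (real n * t) j\<bar>"
    by (simp add: interp_def left_diff_distrib sum_subtractf)
  also have "\<dots> \<le> (\<Sum>j\<le>n. \<bar>c j - c' j\<bar>)"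
    by (rule order_trans[OF sum_abs sum_mono])
       (auto simp: abs_mult hat_nonneg hat_le_one intro!: mult_left_le)
  finally show ?thesis .
qed

lemma interp_error:
  assumes n: "n \<ge> 1" and v: "L-lipschitz_on {0..1} v" and t: "t \<in> {0..1}"
  shows "\<bar>v t - interp n (\<lambda>j. v (real j / real n)) t\<bar> \<le> L / real n"
proof -
  have L: "L \<ge> 0" using lipschitz_on_nonneg[OF v] .
  have term_le: "\<bar>(v t - v (real j / real n)) * hat (real n * t) j\<bar> \<le> L / real n * hat (real n * t) j"
    if j: "j \<le> n" for j
  proof (cases "\<bar>real n * t - real j\<bar> < 1")
    case True
    have "t - real j / real n = (real n * t - real j) / real n"
      using n by (simp add: field_simps)
    then have "\<bar>t - real j / real n\<bar> = \<bar>real n * t - real j\<bar> / real n"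
      by simp
    also have "\<dots> \<le> 1 / real n"
      using True n by (intro divide_right_mono) auto
    finally have "L * \<bar>t - real j / real n\<bar> \<le> L * (1 / real n)"
      using L by (rule mult_left_mono)
    moreover have "\<bar>v t - v (real j / real n)\<bar> \<le> L * \<bar>t - real j / real n\<bar>"
      using lipschitz_onD[OF v t, of "real j / real n"] j n by (simp add: dist_real_def)
    ultimately have "\<bar>v t - v (real j / real n)\<bar> \<le> L * (1 / real n)"
      by linarith
    then have "\<bar>v t - v (real j / real n)\<bar> * hat (real n * t) j \<le> L / real n * hat (real n * t) j"
      by (intro mult_right_mono hat_nonneg) simp
    then show ?thesis by (simp add: abs_mult hat_nonneg)
  qed (simp add: hat_eq_0)
  have "v t - interp n (\<lambda>j. v (real j / real n)) t
      = (\<Sum>j\<le>n. (v t - v (real j / real n)) * hat (real n * t) j)"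
    using sum_hat_nodes[OF t, of n]
    by (simp add: interp_def left_diff_distrib sum_subtractf flip: sum_distrib_left)
  also have "\<bar>\<dots>\<bar> \<le> (\<Sum>j\<le>n. L / real n * hat (real n * t) j)"
    by (rule order_trans[OF sum_abs sum_mono]) (use term_le in auto)
  also have "\<dots> = L / real n * (\<Sum>j\<le>n. hat (real n * t) j)"
    by (rule sum_distrib_left[symmetric])
  also have "\<dots> = L / real n"
    using sum_hat_nodes[OF t] by simp
  finally show ?thesis .
qed

lemma bounded_seq_pointwise_convergent_subseq:
  fixes p :: "nat \<Rightarrow> 'i::countable \<Rightarrow> real"
  assumes "\<And>n i. \<bar>p n i\<bar> \<le> r"
  obtains \<sigma> l where "strict_mono \<sigma>" and "\<And>i. (\<lambda>n. p (\<sigma> n) i) \<longlonglongrightarrow> l i"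
proof -
  define K where "K = Pi\<^sub>E (UNIV :: 'i set) (\<lambda>_. {-r..r})"
  have "compactin (product_topology (\<lambda>_. euclideanreal) UNIV) K"
    unfolding K_def by (simp add: compactin_PiE)
  then have "compact K"
    by (simp add: euclidean_product_topology)
  moreover have "p n \<in> K" for n
    using assms by (simp add: K_def PiE_UNIV_domain Pi_iff abs_le_iff minus_le_iff)
  ultimately obtain l \<sigma> where "strict_mono \<sigma>" and lim: "(p \<circ> \<sigma>) \<longlonglongrightarrow> l"
    using seq_compactE[OF compact_imp_seq_compact] by metis
  moreover have "(\<lambda>n. p (\<sigma> n) i) \<longlonglongrightarrow> l i" for i
    using continuous_on_tendsto_compose[OF continuous_on_product_coordinates lim] by (simp add: o_def)
  ultimately show thesis using that by blast
qed

lemma exists_node_near: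
  fixes t :: real
  assumes t: "t \<in> {0..1}"
  obtains i where "i \<le> Suc m" and "\<bar>t - real i / real (Suc m)\<bar> \<le> 1 / real (Suc m)"
proof
  define i where "i = nat \<lfloor>t * real (Suc m)\<rfloor>"
  have "real i \<le> t * real (Suc m)" and "t * real (Suc m) < real i + 1"
    using t by (auto simp: i_def)
  moreover have "t * real (Suc m) \<le> real (Suc m)"
    using t by (auto intro: mult_left_le_one_le)
  ultimately show "i \<le> Suc m"
    by linarith
  have "t - real i / real (Suc m) = (t * real (Suc m) - real i) / real (Suc m)"
    by (simp add: field_simps)
  with \<open>real i \<le> t * real (Suc m)\<close> \<open>t * real (Suc m) < real i + 1\<close>
  show "\<bar>t - real i / real (Suc m)\<bar> \<le> 1 / real (Suc m)"
    by (simp add: divide_right_mono)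
qed

(* Arzela-Ascoli: a subsequence converging at all nodes i/(m+1) is uniformly Cauchy,
   since the functions are equi-Lipschitz. *)
lemma lipschitz_seq_uniform_limit_subseq:
  fixes f :: "nat \<Rightarrow> real \<Rightarrow> real"
  assumes bound: "\<And>n t. t \<in> {0..1} \<Longrightarrow> \<bar>f n t\<bar> \<le> r" and lip: "\<And>n. L-lipschitz_on {0..1} (f n)"
  obtains \<sigma> w where "strict_mono \<sigma>" and "uniform_limit {0..1} (\<lambda>n. f (\<sigma> n)) w sequentially"
proof -
  define node where "node = (\<lambda>(i, m). min 1 (real i / real (Suc m)))"
  have node_01: "node k \<in> {0..1}" for k
    by (auto simp: node_def split: prod.split)
  have "\<bar>f n (node k)\<bar> \<le> r" for n k
    using bound node_01 by blast
  then obtain \<sigma> l where \<sigma>: "strict_mono \<sigma>" and l: "\<And>k. (\<lambda>n. f (\<sigma> n) (node k)) \<longlonglongrightarrow> l k"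
    using bounded_seq_pointwise_convergent_subseq[of "\<lambda>n k. f n (node k)" r] by blast
  have "uniformly_Cauchy_on {0..1} (\<lambda>n. f (\<sigma> n))"
  proof (rule uniformly_Cauchy_onI)
    fix e :: real assume e: "e > 0"
    have "(\<lambda>m. L / real (Suc m)) \<longlonglongrightarrow> 0"
      using LIMSEQ_Suc[OF lim_const_over_n] .
    then obtain m where m: "L / real (Suc m) < e / 3"
      using order_tendstoD(2)[of _ 0 sequentially "e / 3"] e by (force simp: eventually_sequentially)
    have "\<forall>\<^sub>F n in sequentially. \<forall>i\<in>{..Suc m}. dist (f (\<sigma> n) (node (i, m))) (l (i, m)) < e / 6"
      using e by (intro eventually_ball_finite ballI tendstoD[OF l]) auto
    then obtain N where N: "\<And>n i. N \<le> n \<Longrightarrow> i \<le> Suc m \<Longrightarrow> \<bar>f (\<sigma> n) (node (i, m)) - l (i, m)\<bar> < e / 6"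
      by (auto simp: eventually_sequentially dist_real_def)
    show "\<exists>M. \<forall>t\<in>{0..1}. \<forall>a\<ge>M. \<forall>b\<ge>M. dist (f (\<sigma> a) t) (f (\<sigma> b) t) < e"
    proof (intro exI ballI allI impI)
      fix t :: real and a b :: nat
      assume t: "t \<in> {0..1}" and a: "N \<le> a" and b: "N \<le> b"
      obtain i where i: "i \<le> Suc m" and near: "\<bar>t - real i / real (Suc m)\<bar> \<le> 1 / real (Suc m)"
        using exists_node_near[OF t] .
      have "node (i, m) = real i / real (Suc m)"
        using i by (simp add: node_def)
      then have near_f: "\<bar>f n t - f n (node (i, m))\<bar> \<le> L / real (Suc m)" for n
        using lipschitz_onD[OF lip t node_01, of n "(i, m)"] near lipschitz_on_nonneg[OF lip]
          mult_left_mono[OF near, of L]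
        by (simp add: dist_real_def)
      show "dist (f (\<sigma> a) t) (f (\<sigma> b) t) < e"
        using near_f[of "\<sigma> a"] near_f[of "\<sigma> b"] N[OF a i] N[OF b i] m
        unfolding dist_real_def by linarith
    qed
  qed
  then obtain w where "uniform_limit {0..1} (\<lambda>n. f (\<sigma> n)) w sequentially"
    using Cauchy_uniformly_convergent uniformly_convergent_on_def by blast
  with \<sigma> show thesis using that by blast
qed

lemma uniform_limit_in_cont_ball:
  assumes "\<And>n. f n \<in> cont_ball r" and "uniform_limit {0..1} f w sequentially"
  shows "w \<in> cont_ball r"
proof -
  have "continuous_on {0..1} w"
    using assms by (intro uniform_limit_theorem[of _ f]) (auto simp: cont_ball_def)
  moreover have "\<bar>w t\<bar> \<le> r" if "t \<in> {0..1}" for t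
    using assms that by (intro Lim_bounded[where M=0, OF tendsto_rabs[OF tendsto_uniform_limitI]])
      (auto simp: cont_ball_def)
  ultimately show ?thesis by (simp add: cont_ball_def)
qed

locale lipschitz_compact_map =
  fixes T :: "(real \<Rightarrow> real) \<Rightarrow> real \<Rightarrow> real" and r L C :: real
  assumes r_pos: "r > 0"
    and bounded: "\<And>u t. u \<in> cont_ball r \<Longrightarrow> t \<in> {0..1} \<Longrightarrow> \<bar>T u t\<bar> \<le> r"
    and lipschitz_t: "\<And>u. u \<in> cont_ball r \<Longrightarrow> L-lipschitz_on {0..1} (T u)"
    and lipschitz_u: "\<And>u v d t. u \<in> cont_ball r \<Longrightarrow> v \<in> cont_ball r \<Longrightarrow>
                       (\<And>s. s \<in> {0..1} \<Longrightarrow> \<bar>u s - v s\<bar> \<le> d) \<Longrightarrow> t \<in> {0..1} \<Longrightarrow>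
                       \<bar>T u t - T v t\<bar> \<le> C * d"
begin

lemma C_nonneg: "C \<ge> 0"
proof -
  have "(\<lambda>_. 0) \<in> cont_ball r"
    using r_pos by (simp add: cont_ball_def)
  from lipschitz_u[OF this this, of 1 0] show ?thesis by simp
qed

lemma maps_cont_ball: "u \<in> cont_ball r \<Longrightarrow> T u \<in> cont_ball r"
  using bounded lipschitz_on_continuous_on[OF lipschitz_t] by (simp add: cont_ball_def)

lemma continuous_on_eval_interp:
  assumes "t \<in> {0..1}"
  shows "continuous_on (ncube n r) (\<lambda>c. T (interp n c) t)"
  unfolding continuous_on_def
proof
  fix c0 assume c0: "c0 \<in> ncube n r"
  define g where "g c = C * (\<Sum>i\<le>n. \<bar>c i - c0 i\<bar>)" for c :: "nat \<Rightarrow> real"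
  have "continuous_on UNIV g"
    unfolding g_def by (intro continuous_intros continuous_on_product_coordinates)
  then have "(g \<longlongrightarrow> g c0) (at c0 within ncube n r)"
    by (metis UNIV_I continuous_on_def subset_UNIV tendsto_within_subset)
  then have g0: "(g \<longlongrightarrow> 0) (at c0 within ncube n r)"
    by (simp add: g_def)
  have "norm (T (interp n c) t - T (interp n c0) t) \<le> g c" if "c \<in> ncube n r" for c
    unfolding g_def real_norm_def
    by (rule lipschitz_u[OF interp_in_cont_ball[OF that] interp_in_cont_ball[OF c0] interp_diff_le assms])
  then have "\<forall>\<^sub>F c in at c0 within ncube n r. norm (T (interp n c) t - T (interp n c0) t) \<le> g c"
    unfolding eventually_at_filter by (auto intro: always_eventually)
  then show "((\<lambda>c. T (interp n c) t) \<longlongrightarrow> T (interp n c0) t) (at c0 within ncube n r)"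
    by (rule LIM_zero_cancel[OF Lim_null_comparison[OF _ g0]])
qed

(* Brouwer's theorem for the map sending the nodal values of a piecewise linear function u
   to the nodal values of T u. *)
lemma approx_fixpoint:
  assumes n: "n \<ge> 1"
  shows "\<exists>u\<in>cont_ball r. \<forall>t\<in>{0..1}. \<bar>T u t - u t\<bar> \<le> L / real n"
proof -
  define \<Phi> where "\<Phi> c = (\<lambda>j. if j \<le> n then T (interp n c) (real j / real n) else 0)" for c
  have node: "real j / real n \<in> {0..1}" if "j \<le> n" for j
    using n that by (auto simp: divide_le_eq_1)
  have "continuous_on (ncube n r) \<Phi>"
  proof (rule continuous_on_coordinatewise_then_product)
    show "continuous_on (ncube n r) (\<lambda>c. \<Phi> c j)" for j
      by (cases "j \<le> n") (auto simp: \<Phi>_def intro: continuous_on_eval_interp node)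
  qed
  moreover have "\<Phi> ` ncube n r \<subseteq> ncube n r"
    using bounded[OF interp_in_cont_ball node] r_pos by (auto simp: \<Phi>_def ncube_def)
  ultimately obtain c where c: "c \<in> ncube n r" and "\<Phi> c = c"
    using ncube_fixpoint[OF r_pos] by blast
  then have "c j = T (interp n c) (real j / real n)" if "j \<le> n" for j
    using that fun_cong[OF \<open>\<Phi> c = c\<close>, of j] unfolding \<Phi>_def by (simp split: if_splits)
  then have "interp n c = interp n (\<lambda>j. T (interp n c) (real j / real n))"
    unfolding interp_def by (intro ext sum.cong) auto
  then have "\<bar>T (interp n c) t - interp n c t\<bar> \<le> L / real n" if "t \<in> {0..1}" for t
    using interp_error[OF n lipschitz_t[OF interp_in_cont_ball[OF c]] that] by simp
  then show ?thesis
    using interp_in_cont_ball[OF c] by blast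
qed

lemma tendsto_T:
  assumes u: "\<And>n. u n \<in> cont_ball r" and w: "w \<in> cont_ball r"
    and lim: "uniform_limit {0..1} u w sequentially" and t: "t \<in> {0..1}"
  shows "(\<lambda>n. T (u n) t) \<longlonglongrightarrow> T w t"
proof (rule tendstoI)
  fix e :: real assume e: "e > 0"
  then have "\<forall>\<^sub>F n in sequentially. \<forall>s\<in>{0..1}. dist (u n s) (w s) < e / (C + 1)"
    using C_nonneg by (intro uniform_limitD[OF lim]) simp
  then show "\<forall>\<^sub>F n in sequentially. dist (T (u n) t) (T w t) < e"
  proof (rule eventually_mono)
    fix n assume "\<forall>s\<in>{0..1}. dist (u n s) (w s) < e / (C + 1)"
    then have "\<bar>T (u n) t - T w t\<bar> \<le> C * (e / (C + 1))"
      by (intro lipschitz_u[OF u w _ t]) (auto simp: dist_real_def less_imp_le)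
    also have "\<dots> < e"
      using e C_nonneg by (simp add: field_simps)
    finally show "dist (T (u n) t) (T w t) < e"
      by (simp add: dist_real_def)
  qed
qed

(* A uniform limit of a subsequence of T-images of approximate fixed points is a fixed point. *)
theorem fixpoint: "\<exists>w\<in>cont_ball r. \<forall>t\<in>{0..1}. T w t = w t"
proof -
  have "\<exists>u. u \<in> cont_ball r \<and> (\<forall>t\<in>{0..1}. \<bar>T u t - u t\<bar> \<le> L / real (Suc n))" for n
    using approx_fixpoint[of "Suc n"] by auto
  then obtain U where U: "\<And>n. U n \<in> cont_ball r"
    and U_approx: "\<And>n t. t \<in> {0..1} \<Longrightarrow> \<bar>T (U n) t - U n t\<bar> \<le> L / real (Suc n)"
    using choice[of "\<lambda>n u. u \<in> cont_ball r \<and> (\<forall>t\<in>{0..1}. \<bar>T u t - u t\<bar> \<le> L / real (Suc n))"]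
    by blast
  obtain \<sigma> w where \<sigma>: "strict_mono \<sigma>" and lim_TU: "uniform_limit {0..1} (\<lambda>n. T (U (\<sigma> n))) w sequentially"
    using lipschitz_seq_uniform_limit_subseq[of "\<lambda>n. T (U n)" r L, OF bounded[OF U] lipschitz_t[OF U]]
    by blast
  have w: "w \<in> cont_ball r"
    using uniform_limit_in_cont_ball[OF maps_cont_ball[OF U] lim_TU] .
  have lim0: "(\<lambda>n. L / real (Suc (\<sigma> n))) \<longlonglongrightarrow> 0"
    using LIMSEQ_subseq_LIMSEQ[OF LIMSEQ_Suc[OF lim_const_over_n] \<sigma>] by (simp add: o_def)
  have "uniform_limit {0..1} (\<lambda>n _. L / real (Suc (\<sigma> n))) (\<lambda>_. 0) sequentially"
  proof (rule uniform_limitI)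
    fix e :: real assume "e > 0"
    from tendstoD[OF lim0 this]
    show "\<forall>\<^sub>F n in sequentially. \<forall>t\<in>{0..1}. dist (L / real (Suc (\<sigma> n))) 0 < e"
      by (rule eventually_mono) simp
  qed
  moreover have "\<forall>\<^sub>F n in sequentially. \<forall>t\<in>{0..1}. norm (U (\<sigma> n) t - T (U (\<sigma> n)) t) \<le> L / real (Suc (\<sigma> n))"
    using U_approx by (intro always_eventually allI ballI) (simp add: abs_minus_commute)
  ultimately have "uniform_limit {0..1} (\<lambda>n t. U (\<sigma> n) t - T (U (\<sigma> n)) t) (\<lambda>_. 0) sequentially"
    by (rule uniform_limit_null_comparison[rotated])
  from uniform_limit_add[OF this lim_TU]
  have lim_U: "uniform_limit {0..1} (\<lambda>n. U (\<sigma> n)) w sequentially"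
    by simp
  have "T w t = w t" if t: "t \<in> {0..1}" for t
    using tendsto_T[OF U w lim_U t] tendsto_uniform_limitI[OF lim_TU t] by (rule LIMSEQ_unique)
  with w show ?thesis by blast
qed

end

section \<open>The operator of the integral equation\<close>

lemma abs_quotient_diff_le:
  fixes a b A B m \<beta> c :: real
  assumes m: "m > 0" "m \<le> A" "m \<le> B" and ab: "\<bar>a - b\<bar> \<le> c" and AB: "\<bar>A - B\<bar> \<le> c" and b: "\<bar>b\<bar> \<le> \<beta>"
  shows "\<bar>a / A - b / B\<bar> \<le> (1 / m + \<beta> / m\<^sup>2) * c"
proof -
  have "a / A - b / B = (a - b) / A + b * (B - A) / (A * B)"
    using m by (simp add: field_simps)
  also have "\<bar>\<dots>\<bar> \<le> \<bar>a - b\<bar> / A + \<bar>b\<bar> * \<bar>B - A\<bar> / (A * B)"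
    using m by (simp add: abs_mult abs_triangle_ineq[THEN order_trans])
  also have "\<dots> \<le> c / m + \<beta> * c / m\<^sup>2"
    using m ab AB b
    by (intro add_mono frac_le mult_mono) (auto simp: power2_eq_square abs_minus_commute intro: mult_mono)
  finally show ?thesis
    by (simp add: algebra_simps)
qed

lemma abs_integral_diff_le:
  fixes f g :: "real \<Rightarrow> real"
  assumes "f integrable_on {0..1}" "g integrable_on {0..1}" "\<And>s. s \<in> {0..1} \<Longrightarrow> \<bar>f s - g s\<bar> \<le> B"
  shows "\<bar>integral {0..1} f - integral {0..1} g\<bar> \<le> B"
proof -
  have "norm (integral {0..1} (\<lambda>s. f s - g s)) \<le> integral {0..1} (\<lambda>s::real. B)"
    using assms by (intro integral_norm_bound_integral integrable_diff) auto
  then show ?thesis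
    using integral_diff[OF assms(1,2)] by (simp add: fun_diff_def)
qed

lemma abs_integral_le:
  fixes f :: "real \<Rightarrow> real"
  assumes "f integrable_on {0..1}" "\<And>s. s \<in> {0..1} \<Longrightarrow> \<bar>f s\<bar> \<le> B"
  shows "\<bar>integral {0..1} f\<bar> \<le> B"
  using abs_integral_diff_le[OF assms(1) integrable_0, of B] assms(2) by simp

lemma kern_pos: "kern t s > 0"
  by (simp add: kern_def)

lemma cosh_le_cosh_1: "x \<in> {0..1} \<Longrightarrow> cosh x \<le> cosh (1::real)"
  by (subst cosh_real_nonneg_le_iff) auto

definition kern_bound :: real where
  "kern_bound = cosh 1 * cosh 1 / sinh 1"

lemma kern_le: "t \<in> {0..1} \<Longrightarrow> s \<in> {0..1} \<Longrightarrow> kern t s \<le> kern_bound"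
  by (auto simp: kern_def kern_bound_def intro!: divide_right_mono mult_mono cosh_le_cosh_1)

lemma continuous_on_kern: "continuous_on A (kern t)"
proof -
  have "continuous_on A (\<lambda>s. if s \<le> t then cosh (1 - t) * cosh s / sinh 1 else cosh t * cosh (1 - s) / sinh 1)"
    by (intro continuous_on_cases_1 continuous_intros) auto
  then show ?thesis
    by (rule continuous_on_cong[THEN iffD1, rotated 2]) (auto simp: kern_def mult.commute)
qed

lemma abs_cosh_diff_le: "a \<in> {0..1} \<Longrightarrow> b \<in> {0..1} \<Longrightarrow> \<bar>cosh a - cosh b\<bar> \<le> sinh 1 * \<bar>a - b\<bar>"
  for a b :: real
  using field_differentiable_bound[of "{0..1::real}" cosh sinh "sinh 1" a b]
  by (fastforce intro!: derivative_eq_intros)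

lemma cosh_product_lipschitz:
  fixes c :: real
  assumes "c \<in> {0..1}"
  shows "(cosh 1)-lipschitz_on {0..1} (\<lambda>x. cosh x * cosh c / sinh 1)"
proof (rule lipschitz_onI)
  fix x y :: real assume "x \<in> {0..1}" "y \<in> {0..1}"
  have "dist (cosh x * cosh c / sinh 1) (cosh y * cosh c / sinh 1) = \<bar>cosh x - cosh y\<bar> * cosh c / sinh 1"
    by (simp add: dist_real_def abs_mult flip: left_diff_distrib diff_divide_distrib)
  also have "\<dots> \<le> (sinh 1 * \<bar>x - y\<bar>) * cosh 1 / sinh 1"
    using assms \<open>x \<in> {0..1}\<close> \<open>y \<in> {0..1}\<close>
    by (intro divide_right_mono mult_mono abs_cosh_diff_le cosh_le_cosh_1) auto
  also have "\<dots> = cosh 1 * dist x y"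
    by (simp add: dist_real_def)
  finally show "dist (cosh x * cosh c / sinh 1) (cosh y * cosh c / sinh 1) \<le> cosh 1 * dist x y" .
qed simp

lemma kern_lipschitz:
  assumes s: "s \<in> {0..1}"
  shows "(cosh 1)-lipschitz_on {0..1} (\<lambda>t. kern t s)"
proof -
  have "(cosh 1)-lipschitz_on {0..s} (\<lambda>t. cosh t * cosh (1 - s) / sinh 1)"
    using s by (intro lipschitz_on_subset[OF cosh_product_lipschitz]) auto
  moreover have "(cosh 1)-lipschitz_on {s..1} (\<lambda>t. cosh (1 - t) * cosh s / sinh 1)"
  proof (rule lipschitz_onI)
    fix x y assume "x \<in> {s..1}" "y \<in> {s..1}"
    then show "dist (cosh (1 - x) * cosh s / sinh 1) (cosh (1 - y) * cosh s / sinh 1) \<le> cosh 1 * dist x y"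
      using lipschitz_onD[OF cosh_product_lipschitz[OF s], of "1 - x" "1 - y"] s
      by (auto simp: dist_real_def abs_minus_commute)
  qed simp
  ultimately have "(cosh 1)-lipschitz_on {0..1}
      (\<lambda>t. if t \<le> s then cosh t * cosh (1 - s) / sinh 1 else cosh (1 - t) * cosh s / sinh 1)"
    using s by (intro lipschitz_on_concat) (auto simp: mult.commute)
  moreover have "(\<lambda>t. kern t s)
      = (\<lambda>t. if t \<le> s then cosh t * cosh (1 - s) / sinh 1 else cosh (1 - t) * cosh s / sinh 1)"
    by (auto simp: kern_def fun_eq_iff mult.commute)
  ultimately show ?thesis
    by metis
qed

definition exp_mean :: "(real \<Rightarrow> real) \<Rightarrow> real" where
  "exp_mean u = integral {0..1} (\<lambda>x. exp (u x))"

definition green_op :: "(real \<Rightarrow> real) \<Rightarrow> real \<Rightarrow> real" where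
  "green_op u t = integral {0..1} (\<lambda>s. kern t s * (sin (3/2 * pi * s) * exp (u s) / exp_mean u))"

lemma solves_iff_green_op: "solves lam u \<longleftrightarrow> (\<forall>t\<in>{0..1}. u t = lam * green_op u t)"
  by (simp add: solves_def green_op_def exp_mean_def)

lemma exp_mean_bounds:
  assumes u: "u \<in> cont_ball r"
  shows "exp (-r) \<le> exp_mean u" and "exp_mean u \<le> exp r"
proof -
  have "(\<lambda>x. exp (u x)) integrable_on {0..1}"
    using cont_ballD(1)[OF u] by (intro integrable_continuous_interval continuous_intros)
  moreover have "-r \<le> u x" "u x \<le> r" if "x \<in> {0..1}" for x
    using cont_ballD(2)[OF u that] by auto
  ultimately show "exp (-r) \<le> exp_mean u" "exp_mean u \<le> exp r"
    using integral_le[of "\<lambda>_. exp (-r)" "{0..1}" "\<lambda>x. exp (u x)"]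
      integral_le[of "\<lambda>x. exp (u x)" "{0..1}" "\<lambda>_. exp r"]
    by (auto simp: exp_mean_def)
qed

lemma exp_mean_pos: "u \<in> cont_ball r \<Longrightarrow> exp_mean u > 0"
  using exp_mean_bounds(1)[of u r] exp_gt_zero[of "-r"] by linarith

lemma density_bounds:
  assumes u: "u \<in> cont_ball r" and s: "s \<in> {0..1}"
  shows "exp (-2*r) \<le> exp (u s) / exp_mean u" and "exp (u s) / exp_mean u \<le> exp (2*r)"
proof -
  have E: "exp (-r) \<le> exp_mean u" "exp_mean u \<le> exp r" "exp_mean u > 0"
    using exp_mean_bounds[OF u] exp_mean_pos[OF u] by auto
  have us: "exp (-r) \<le> exp (u s)" "exp (u s) \<le> exp r"
    using cont_ballD(2)[OF u s] by auto
  have "exp (-2*r) = exp (-r) / exp r"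
    by (simp flip: exp_diff)
  also have "\<dots> \<le> exp (u s) / exp_mean u"
    using E us by (intro frac_le) auto
  finally show "exp (-2*r) \<le> exp (u s) / exp_mean u" .
  have "exp (u s) / exp_mean u \<le> exp r / exp (-r)"
    using E us by (intro frac_le) auto
  also have "\<dots> = exp (2*r)"
    by (simp flip: exp_diff)
  finally show "exp (u s) / exp_mean u \<le> exp (2*r)" .
qed

lemma abs_exp_diff_le: "\<bar>a\<bar> \<le> r \<Longrightarrow> \<bar>b\<bar> \<le> r \<Longrightarrow> \<bar>exp a - exp b\<bar> \<le> exp r * \<bar>a - b\<bar>"
  for a b r :: real
  using field_differentiable_bound[of "{-r..r}" exp exp "exp r" a b]
  by (force intro: DERIV_subset[OF DERIV_exp])

lemma exp_mean_diff_le: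
  assumes u: "u \<in> cont_ball r" and v: "v \<in> cont_ball r" and d: "\<And>s. s \<in> {0..1} \<Longrightarrow> \<bar>u s - v s\<bar> \<le> d"
  shows "\<bar>exp_mean u - exp_mean v\<bar> \<le> exp r * d"
  unfolding exp_mean_def
proof (rule abs_integral_diff_le)
  show "(\<lambda>x. exp (u x)) integrable_on {0..1}" "(\<lambda>x. exp (v x)) integrable_on {0..1}"
    using cont_ballD(1)[OF u] cont_ballD(1)[OF v] by (auto intro!: integrable_continuous_interval continuous_intros)
  fix s :: real assume s: "s \<in> {0..1}"
  show "\<bar>exp (u s) - exp (v s)\<bar> \<le> exp r * d"
    using abs_exp_diff_le[OF cont_ballD(2)[OF u s] cont_ballD(2)[OF v s]] d[OF s]
    by (meson exp_ge_zero mult_left_mono order_trans)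
qed

lemma density_diff_le:
  assumes u: "u \<in> cont_ball r" and v: "v \<in> cont_ball r" and d: "\<And>s. s \<in> {0..1} \<Longrightarrow> \<bar>u s - v s\<bar> \<le> d"
    and s: "s \<in> {0..1}"
  shows "\<bar>exp (u s) / exp_mean u - exp (v s) / exp_mean v\<bar> \<le> (exp (2*r) + exp (4*r)) * d"
proof -
  have "\<bar>exp (u s) / exp_mean u - exp (v s) / exp_mean v\<bar> \<le> (1 / exp (-r) + exp r / (exp (-r))\<^sup>2) * (exp r * d)"
  proof (rule abs_quotient_diff_le)
    show "\<bar>exp (u s) - exp (v s)\<bar> \<le> exp r * d"
      using abs_exp_diff_le[OF cont_ballD(2)[OF u s] cont_ballD(2)[OF v s]] d[OF s]
      by (meson exp_ge_zero mult_left_mono order_trans)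
    show "\<bar>exp (v s)\<bar> \<le> exp r"
      using cont_ballD(2)[OF v s] by simp
  qed (use exp_mean_bounds[OF u] exp_mean_bounds[OF v] exp_mean_diff_le[OF u v d] in auto)
  also have "\<dots> = (exp (2*r) + exp (4*r)) * d"
    by (simp add: exp_minus field_simps power2_eq_square flip: exp_add)
  finally show ?thesis .
qed

lemma abs_weighted_density_le:
  assumes u: "u \<in> cont_ball r" and s: "s \<in> {0..1}"
  shows "\<bar>sin (3/2 * pi * s) * exp (u s) / exp_mean u\<bar> \<le> exp (2*r)"
proof -
  have "\<bar>sin (3/2 * pi * s) * exp (u s) / exp_mean u\<bar> = \<bar>sin (3/2 * pi * s)\<bar> * (exp (u s) / exp_mean u)"
    using exp_mean_pos[OF u] by (simp add: abs_mult)
  also have "\<dots> \<le> 1 * exp (2*r)"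
    using density_bounds[OF u s] exp_mean_pos[OF u] by (intro mult_mono) auto
  finally show ?thesis by simp
qed

lemma abs_weighted_density_diff_le:
  assumes u: "u \<in> cont_ball r" and v: "v \<in> cont_ball r" and d: "\<And>s. s \<in> {0..1} \<Longrightarrow> \<bar>u s - v s\<bar> \<le> d"
    and s: "s \<in> {0..1}"
  shows "\<bar>sin (3/2 * pi * s) * exp (u s) / exp_mean u - sin (3/2 * pi * s) * exp (v s) / exp_mean v\<bar>
    \<le> (exp (2*r) + exp (4*r)) * d"
proof -
  have "\<bar>sin (3/2 * pi * s) * exp (u s) / exp_mean u - sin (3/2 * pi * s) * exp (v s) / exp_mean v\<bar>
      = \<bar>sin (3/2 * pi * s)\<bar> * \<bar>exp (u s) / exp_mean u - exp (v s) / exp_mean v\<bar>"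
    by (simp add: right_diff_distrib flip: abs_mult)
  also have "\<dots> \<le> 1 * ((exp (2*r) + exp (4*r)) * d)"
    using density_diff_le[OF u v d s] by (intro mult_mono) auto
  finally show ?thesis by simp
qed

lemma green_op_integrable:
  "u \<in> cont_ball r \<Longrightarrow> (\<lambda>s. kern t s * (sin (3/2 * pi * s) * exp (u s) / exp_mean u)) integrable_on {0..1}"
  using exp_mean_pos[of u r]
  by (intro integrable_continuous_interval continuous_intros continuous_on_kern cont_ballD(1)) auto

lemma abs_green_op_le:
  assumes u: "u \<in> cont_ball r" and t: "t \<in> {0..1}"
  shows "\<bar>green_op u t\<bar> \<le> kern_bound * exp (2*r)"
  unfolding green_op_def
proof (rule abs_integral_le[OF green_op_integrable[OF u]])
  fix s :: real assume s: "s \<in> {0..1}"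
  have "kern t s * \<bar>sin (3/2 * pi * s) * exp (u s) / exp_mean u\<bar> \<le> kern_bound * exp (2*r)"
    using kern_le[OF t s] kern_pos[of t s] abs_weighted_density_le[OF u s] by (intro mult_mono) auto
  then show "\<bar>kern t s * (sin (3/2 * pi * s) * exp (u s) / exp_mean u)\<bar> \<le> kern_bound * exp (2*r)"
    using kern_pos[of t s] by (simp add: abs_mult)
qed

lemma green_op_lipschitz:
  assumes u: "u \<in> cont_ball r"
  shows "(cosh 1 * exp (2*r))-lipschitz_on {0..1} (green_op u)"
proof (rule lipschitz_onI)
  fix t t' :: real assume t: "t \<in> {0..1}" and t': "t' \<in> {0..1}"
  have "\<bar>green_op u t - green_op u t'\<bar> \<le> cosh 1 * \<bar>t - t'\<bar> * exp (2*r)"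
    unfolding green_op_def
  proof (rule abs_integral_diff_le[OF green_op_integrable[OF u] green_op_integrable[OF u]])
    fix s :: real assume s: "s \<in> {0..1}"
    define X where "X = sin (3/2 * pi * s) * exp (u s) / exp_mean u"
    have "\<bar>kern t s - kern t' s\<bar> \<le> cosh 1 * \<bar>t - t'\<bar>"
      using lipschitz_onD[OF kern_lipschitz[OF s] t t'] by (simp add: dist_real_def)
    then have "\<bar>kern t s - kern t' s\<bar> * \<bar>X\<bar> \<le> cosh 1 * \<bar>t - t'\<bar> * exp (2*r)"
      using abs_weighted_density_le[OF u s] by (intro mult_mono) (auto simp: X_def)
    then show "\<bar>kern t s * (sin (3/2 * pi * s) * exp (u s) / exp_mean u)
        - kern t' s * (sin (3/2 * pi * s) * exp (u s) / exp_mean u)\<bar> \<le> cosh 1 * \<bar>t - t'\<bar> * exp (2*r)"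
      by (simp add: X_def abs_mult left_diff_distrib[symmetric] del: times_divide_eq_right)
  qed
  then show "dist (green_op u t) (green_op u t') \<le> cosh 1 * exp (2*r) * dist t t'"
    by (simp add: dist_real_def mult_ac)
qed simp

lemma green_op_diff_le:
  assumes u: "u \<in> cont_ball r" and v: "v \<in> cont_ball r" and d: "\<And>s. s \<in> {0..1} \<Longrightarrow> \<bar>u s - v s\<bar> \<le> d"
    and t: "t \<in> {0..1}"
  shows "\<bar>green_op u t - green_op v t\<bar> \<le> kern_bound * ((exp (2*r) + exp (4*r)) * d)"
  unfolding green_op_def
proof (rule abs_integral_diff_le[OF green_op_integrable[OF u] green_op_integrable[OF v]])
  fix s :: real assume s: "s \<in> {0..1}"
  have "kern t s * \<bar>sin (3/2 * pi * s) * exp (u s) / exp_mean u - sin (3/2 * pi * s) * exp (v s) / exp_mean v\<bar>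
      \<le> kern_bound * ((exp (2*r) + exp (4*r)) * d)"
    using kern_le[OF t s] kern_pos[of t s] abs_weighted_density_diff_le[OF u v d s]
    by (intro mult_mono) auto
  then show "\<bar>kern t s * (sin (3/2 * pi * s) * exp (u s) / exp_mean u)
      - kern t s * (sin (3/2 * pi * s) * exp (v s) / exp_mean v)\<bar>
      \<le> kern_bound * ((exp (2*r) + exp (4*r)) * d)"
    using kern_pos[of t s] by (simp add: abs_mult right_diff_distrib[symmetric] del: times_divide_eq_right)
qed

lemma sin_nonneg_0_23: "s \<in> {0..2/3} \<Longrightarrow> sin (3/2 * pi * s) \<ge> 0"
  by (intro sin_ge_zero) (auto simp: field_simps)

lemma sin_nonpos_23_1: "s \<in> {2/3..1} \<Longrightarrow> sin (3/2 * pi * s) \<le> 0"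
proof -
  assume s: "s \<in> {2/3..1}"
  have "sin (3/2 * pi * s - pi) \<ge> 0"
    using s by (intro sin_ge_zero) (auto simp: field_simps)
  then show ?thesis by (simp add: sin_diff)
qed

lemma weighted_density_lower_bounds:
  assumes u: "u \<in> cont_ball r"
  shows "s \<in> {0..2/3} \<Longrightarrow> exp (-2*r) * sin (3/2 * pi * s) \<le> sin (3/2 * pi * s) * exp (u s) / exp_mean u"
    and "s \<in> {2/3..1} \<Longrightarrow> exp (2*r) * sin (3/2 * pi * s) \<le> sin (3/2 * pi * s) * exp (u s) / exp_mean u"
proof -
  assume s: "s \<in> {0..2/3}"
  then have "exp (-2*r) * sin (3/2 * pi * s) \<le> exp (u s) / exp_mean u * sin (3/2 * pi * s)"
    by (intro mult_right_mono density_bounds(1)[OF u] sin_nonneg_0_23) auto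
  then show "exp (-2*r) * sin (3/2 * pi * s) \<le> sin (3/2 * pi * s) * exp (u s) / exp_mean u"
    by (simp add: mult.commute)
next
  assume s: "s \<in> {2/3..1}"
  then have "exp (2*r) * sin (3/2 * pi * s) \<le> exp (u s) / exp_mean u * sin (3/2 * pi * s)"
    by (intro mult_right_mono_neg density_bounds(2)[OF u] sin_nonpos_23_1) auto
  then show "exp (2*r) * sin (3/2 * pi * s) \<le> sin (3/2 * pi * s) * exp (u s) / exp_mean u"
    by (simp add: mult.commute)
qed

lemma integral_cmult_le:
  fixes h g :: "real \<Rightarrow> real"
  assumes "h integrable_on {a..b}" "g integrable_on {a..b}" "\<And>s. s \<in> {a..b} \<Longrightarrow> c * h s \<le> g s"
  shows "c * integral {a..b} h \<le> integral {a..b} g"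
  using integral_le[OF integrable_on_mult_right[OF assms(1)] assms(2) assms(3)] by simp

(* The weight sin (3 pi s / 2) is nonnegative on [0, 2/3] and nonpositive on [2/3, 1], so the
   bounds on the density give a lower bound on each part of the integral. *)
lemma FF_le_green_op:
  assumes u: "u \<in> cont_ball r" and t: "t \<in> {0..1}"
  shows "FF r t \<le> green_op u t"
proof -
  define h where "h s = kern t s * sin (3/2 * pi * s)" for s
  define g where "g s = kern t s * (sin (3/2 * pi * s) * exp (u s) / exp_mean u)" for s
  have ih: "h integrable_on {a..b}" for a b
    unfolding h_def by (intro integrable_continuous_interval continuous_intros continuous_on_kern)
  have ig: "g integrable_on {a..b}" if "{a..b} \<subseteq> {0..1}" for a b
    unfolding g_def by (rule integrable_on_subinterval[OF green_op_integrable[OF u] that])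
  have "c * h s \<le> g s" if "c * sin (3/2 * pi * s) \<le> sin (3/2 * pi * s) * exp (u s) / exp_mean u" for c s
    using mult_left_mono[OF that less_imp_le[OF kern_pos]] by (simp add: h_def g_def mult.left_commute)
  then have "exp (-2*r) * integral {0..2/3} h \<le> integral {0..2/3} g"
    and "exp (2*r) * integral {2/3..1} h \<le> integral {2/3..1} g"
    using weighted_density_lower_bounds[OF u] by (auto intro!: integral_cmult_le ih ig)
  moreover have "green_op u t = integral {0..2/3} g + integral {2/3..1} g"
    unfolding green_op_def g_def[symmetric] using ig[of 0 1]
    by (intro Henstock_Kurzweil_Integration.integral_combine[symmetric]) auto
  ultimately show ?thesis
    unfolding FF_def h_def[symmetric] by linarith
qed

section \<open>Solutions of prescribed sup norm\<close>

lemma supnorm_attained: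
  assumes "continuous_on {0..1} f"
  obtains t where "t \<in> {0..1}" and "\<bar>f t\<bar> = supnorm f"
proof -
  have "continuous_on {0..1} (\<lambda>t. \<bar>f t\<bar>)"
    using assms by (intro continuous_intros)
  then obtain t where t: "t \<in> {0..1}" and max: "\<forall>s\<in>{0..1}. \<bar>f s\<bar> \<le> \<bar>f t\<bar>"
    using continuous_attains_sup[of "{0..1::real}" "\<lambda>t. \<bar>f t\<bar>"] by auto
  have "supnorm f = \<bar>f t\<bar>"
    unfolding supnorm_def by (rule cSup_eq_maximum) (use t max in auto)
  with t that show thesis by simp
qed

lemma abs_le_supnorm:
  assumes "continuous_on {0..1} f" and "t \<in> {0..1}"
  shows "\<bar>f t\<bar> \<le> supnorm f"
proof -
  have "bdd_above ((\<lambda>t. \<bar>f t\<bar>) ` {0..1})"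
    using assms(1) by (intro compact_imp_bounded[THEN bounded_imp_bdd_above] compact_continuous_image
        continuous_intros) auto
  then show ?thesis
    unfolding supnorm_def using assms(2) by (rule cSUP_upper2) simp
qed

lemma supnorm_le:
  assumes "\<And>t. t \<in> {0..1} \<Longrightarrow> \<bar>f t\<bar> \<le> B"
  shows "supnorm f \<le> B"
  unfolding supnorm_def by (rule cSUP_least) (use assms in auto)

lemma supnorm_diff_le:
  assumes "continuous_on {0..1} f" "continuous_on {0..1} g" and "\<And>t. t \<in> {0..1} \<Longrightarrow> \<bar>f t - g t\<bar> \<le> c"
  shows "\<bar>supnorm f - supnorm g\<bar> \<le> c"
proof -
  have "supnorm f \<le> supnorm g + c"
    using assms abs_le_supnorm[OF assms(2)] by (intro supnorm_le) fastforce
  moreover have "supnorm g \<le> supnorm f + c"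
    using assms abs_le_supnorm[OF assms(1)] by (intro supnorm_le) fastforce
  ultimately show ?thesis by linarith
qed

lemma cont_ball_supnorm: "continuous_on {0..1} u \<Longrightarrow> u \<in> cont_ball (supnorm u)"
  by (simp add: cont_ball_def abs_le_supnorm)

lemma continuous_on_green_op: "u \<in> cont_ball r \<Longrightarrow> continuous_on {0..1} (green_op u)"
  by (rule lipschitz_on_continuous_on[OF green_op_lipschitz])

lemma FF_le_supnorm_green_op:
  assumes "u \<in> cont_ball r" and "t \<in> {0..1}"
  shows "FF r t \<le> supnorm (green_op u)"
  using FF_le_green_op[OF assms] abs_le_supnorm[OF continuous_on_green_op[OF assms(1)] assms(2)] by linarith

definition normalized_green_op :: "(real \<Rightarrow> real) \<Rightarrow> real \<Rightarrow> real" where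
  "normalized_green_op u t = green_op u t / supnorm (green_op u)"

lemma abs_normalized_green_op_le:
  assumes "u \<in> cont_ball r" and "t \<in> {0..1}"
  shows "\<bar>normalized_green_op u t\<bar> \<le> 1"
  using abs_le_supnorm[OF continuous_on_green_op[OF assms(1)] assms(2)]
  by (auto simp: normalized_green_op_def abs_divide divide_le_eq_1)

lemma normalized_green_op_lipschitz:
  assumes u: "u \<in> cont_ball r" and m: "m > 0" "m \<le> supnorm (green_op u)"
  shows "(cosh 1 * exp (2*r) / m)-lipschitz_on {0..1} (normalized_green_op u)"
proof (rule lipschitz_on_le)
  show "(\<bar>1 / supnorm (green_op u)\<bar> * (cosh 1 * exp (2*r)))-lipschitz_on {0..1} (normalized_green_op u)"
    using lipschitz_on_cmult_real[OF green_op_lipschitz[OF u], of "1 / supnorm (green_op u)"]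
    by (simp add: normalized_green_op_def)
  show "\<bar>1 / supnorm (green_op u)\<bar> * (cosh 1 * exp (2*r)) \<le> cosh 1 * exp (2*r) / m"
    using m by (simp add: divide_simps mult_left_mono)
qed

lemma normalized_green_op_diff_le:
  assumes u: "u \<in> cont_ball r" and v: "v \<in> cont_ball r" and d: "\<And>s. s \<in> {0..1} \<Longrightarrow> \<bar>u s - v s\<bar> \<le> d"
    and t: "t \<in> {0..1}" and m: "m > 0" "m \<le> supnorm (green_op u)" "m \<le> supnorm (green_op v)"
  shows "\<bar>normalized_green_op u t - normalized_green_op v t\<bar>
    \<le> (1 / m + kern_bound * exp (2*r) / m\<^sup>2) * (kern_bound * (exp (2*r) + exp (4*r)) * d)"
  unfolding normalized_green_op_def
proof (rule abs_quotient_diff_le)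
  have diff: "\<bar>green_op u s - green_op v s\<bar> \<le> kern_bound * (exp (2*r) + exp (4*r)) * d"
    if "s \<in> {0..1}" for s
    using green_op_diff_le[OF u v d that] by (simp add: mult.assoc)
  then show "\<bar>green_op u t - green_op v t\<bar> \<le> kern_bound * (exp (2*r) + exp (4*r)) * d"
    using t .
  show "\<bar>supnorm (green_op u) - supnorm (green_op v)\<bar> \<le> kern_bound * (exp (2*r) + exp (4*r)) * d"
    by (rule supnorm_diff_le[OF continuous_on_green_op[OF u] continuous_on_green_op[OF v] diff])
  show "\<bar>green_op v t\<bar> \<le> kern_bound * exp (2*r)"
    by (rule abs_green_op_le[OF v t])
qed (use m in auto)

(* The normalisation is Lipschitz because supnorm (green_op u) >= FF r t0 > 0. *)
lemma normalized_green_op_lipschitz_compact_map: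
  fixes \<sigma> :: real
  assumes r: "r > 0" and t0: "t0 \<in> {0..1}" "FF r t0 > 0" and \<sigma>: "\<bar>\<sigma>\<bar> = 1"
  shows "\<exists>L C. lipschitz_compact_map (\<lambda>u t. \<sigma> * r * normalized_green_op u t) r L C"
proof -
  define m where "m = FF r t0"
  have m: "m > 0" "m \<le> supnorm (green_op u)" if "u \<in> cont_ball r" for u
    using FF_le_supnorm_green_op[OF that t0(1)] t0(2) by (auto simp: m_def)
  have \<sigma>r: "\<bar>\<sigma> * r\<bar> = r"
    using \<sigma> r by (simp add: abs_mult)
  have "lipschitz_compact_map (\<lambda>u t. \<sigma> * r * normalized_green_op u t) r (r * (cosh 1 * exp (2*r) / m))
      (r * ((1 / m + kern_bound * exp (2*r) / m\<^sup>2) * (kern_bound * (exp (2*r) + exp (4*r)))))"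
  proof unfold_locales
    show "r > 0" by (rule r)
    fix u v :: "real \<Rightarrow> real" and d t :: real
    assume u: "u \<in> cont_ball r"
    show "\<bar>\<sigma> * r * normalized_green_op u t\<bar> \<le> r" if "t \<in> {0..1}"
      using abs_normalized_green_op_le[OF u that] r \<sigma> by (simp add: abs_mult)
    show "(r * (cosh 1 * exp (2*r) / m))-lipschitz_on {0..1} (\<lambda>t. \<sigma> * r * normalized_green_op u t)"
      using lipschitz_on_cmult_real[OF normalized_green_op_lipschitz[OF u m[OF u]], of "\<sigma> * r"] by (simp add: \<sigma>r)
    assume v: "v \<in> cont_ball r" and d: "\<And>s. s \<in> {0..1} \<Longrightarrow> \<bar>u s - v s\<bar> \<le> d" and t: "t \<in> {0..1}"
    have "\<bar>\<sigma> * r * normalized_green_op u t - \<sigma> * r * normalized_green_op v t\<bar>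
        = r * \<bar>normalized_green_op u t - normalized_green_op v t\<bar>"
      using \<sigma> r by (simp add: abs_mult flip: right_diff_distrib)
    also have "\<dots> \<le> r * ((1 / m + kern_bound * exp (2*r) / m\<^sup>2) * (kern_bound * (exp (2*r) + exp (4*r)) * d))"
      using normalized_green_op_diff_le[OF u v d t m(1)[OF u] m(2)[OF u] m(2)[OF v]] r by simp
    finally show "\<bar>\<sigma> * r * normalized_green_op u t - \<sigma> * r * normalized_green_op v t\<bar>
        \<le> r * ((1 / m + kern_bound * exp (2*r) / m\<^sup>2) * (kern_bound * (exp (2*r) + exp (4*r)))) * d"
      by (simp only: mult.assoc)
  qed
  then show ?thesis by blast
qed

(* A fixed point w has |w| = r where |green_op w| is maximal, hence supnorm w = r. *)
lemma exists_solution: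
  fixes \<sigma> :: real
  assumes r: "r > 0" and t0: "t0 \<in> {0..1}" "FF r t0 > 0" and \<sigma>: "\<bar>\<sigma>\<bar> = 1"
  obtains w where "w \<in> cont_ball r" and "supnorm w = r" and "supnorm (green_op w) > 0"
    and "solves (\<sigma> * r / supnorm (green_op w)) w"
proof -
  obtain L C where "lipschitz_compact_map (\<lambda>u t. \<sigma> * r * normalized_green_op u t) r L C"
    using normalized_green_op_lipschitz_compact_map[OF r t0 \<sigma>] by blast
  then interpret lipschitz_compact_map "\<lambda>u t. \<sigma> * r * normalized_green_op u t" r L C .
  obtain w where w: "w \<in> cont_ball r" and w_fix: "\<And>t. t \<in> {0..1} \<Longrightarrow> \<sigma> * r * normalized_green_op w t = w t"
    using fixpoint by blast
  have N: "supnorm (green_op w) > 0"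
    using FF_le_supnorm_green_op[OF w t0(1)] t0(2) by linarith
  obtain t1 where t1: "t1 \<in> {0..1}" and max: "\<bar>green_op w t1\<bar> = supnorm (green_op w)"
    using supnorm_attained[OF continuous_on_green_op[OF w]] .
  have "\<bar>w t1\<bar> = r"
    using w_fix[OF t1, symmetric] max N r \<sigma> by (simp add: normalized_green_op_def abs_mult)
  moreover have "supnorm w \<le> r"
    by (rule supnorm_le) (rule cont_ballD(2)[OF w])
  ultimately have "supnorm w = r"
    using abs_le_supnorm[OF cont_ballD(1)[OF w] t1] by simp
  moreover have "solves (\<sigma> * r / supnorm (green_op w)) w"
    unfolding solves_iff_green_op using w_fix by (simp add: normalized_green_op_def)
  ultimately show thesis
    using that w N by blast
qed

lemma eigenvalue_bound:
  assumes \<rho>: "\<rho> > 0" and t0: "t0 \<in> {0..1}" "FF \<rho> t0 > 0"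
    and u: "continuous_on {0..1} u" "supnorm u = \<rho>" and sol: "solves lam u"
  shows "\<bar>lam\<bar> \<le> \<rho> / (SUP t\<in>{0..1}. FF \<rho> t)"
proof -
  have uB: "u \<in> cont_ball \<rho>"
    using cont_ball_supnorm[OF u(1)] u(2) by simp
  have bdd: "bdd_above (FF \<rho> ` {0..1})"
    using FF_le_green_op[OF uB] abs_green_op_le[OF uB]
    by (intro bdd_aboveI2[where M="kern_bound * exp (2*\<rho>)"]) (meson abs_ge_self order_trans)
  have "FF \<rho> t0 \<le> (SUP t\<in>{0..1}. FF \<rho> t)"
    by (rule cSUP_upper[OF t0(1) bdd])
  then have SUP_pos: "(SUP t\<in>{0..1}. FF \<rho> t) > 0"
    using t0(2) by linarith
  have "\<bar>lam\<bar> * FF \<rho> t \<le> \<rho>" if t: "t \<in> {0..1}" for t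
  proof -
    have "\<bar>lam\<bar> * FF \<rho> t \<le> \<bar>lam\<bar> * green_op u t"
      using FF_le_green_op[OF uB t] by (simp add: mult_left_mono)
    also have "\<dots> \<le> \<bar>u t\<bar>"
      using sol t unfolding solves_iff_green_op by (simp add: abs_mult mult_left_mono[OF abs_ge_self])
    also have "\<dots> \<le> \<rho>"
      using cont_ballD(2)[OF uB t] .
    finally show ?thesis .
  qed
  then have "\<bar>lam\<bar> * (SUP t\<in>{0..1}. FF \<rho> t) \<le> \<rho>"
  proof (cases "lam = 0")
    case False
    with \<open>\<And>t. t \<in> {0..1} \<Longrightarrow> \<bar>lam\<bar> * FF \<rho> t \<le> \<rho>\<close>
    have "(SUP t\<in>{0..1}. FF \<rho> t) \<le> \<rho> / \<bar>lam\<bar>"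
      by (intro cSUP_least) (auto simp: pos_le_divide_eq mult.commute)
    with False show ?thesis
      by (simp add: pos_le_divide_eq mult.commute)
  qed (use \<rho> in simp)
  then show ?thesis
    using SUP_pos by (simp add: pos_le_divide_eq)
qed

section \<open>Closed form of FF\<close>

definition primitive_cosh_sin :: "real \<Rightarrow> real" where
  "primitive_cosh_sin s = (sinh s * sin (bb * s) - bb * cosh s * cos (bb * s)) / (1 + bb\<^sup>2)"

definition primitive_cosh_1m_sin :: "real \<Rightarrow> real" where
  "primitive_cosh_1m_sin s = (- sinh (1 - s) * sin (bb * s) - bb * cosh (1 - s) * cos (bb * s)) / (1 + bb\<^sup>2)"

lemma bb_pos: "bb > 0"
  by (simp add: bb_def)

lemma one_plus_bb_sq_pos: "1 + bb\<^sup>2 > 0"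
  by (simp add: add_pos_nonneg)

lemma integral_cosh_sin:
  "a \<le> c \<Longrightarrow> integral {a..c} (\<lambda>s. cosh s * sin (bb * s)) = primitive_cosh_sin c - primitive_cosh_sin a"
proof (rule integral_unique, rule fundamental_theorem_of_calculus)
  fix s
  have "((\<lambda>s. sinh s * sin (bb * s) - bb * cosh s * cos (bb * s)) has_real_derivative
          (1 + bb\<^sup>2) * (cosh s * sin (bb * s))) (at s within {a..c})"
    by (auto intro!: derivative_eq_intros simp: algebra_simps power2_eq_square)
  from DERIV_cdivide[OF this, of "1 + bb\<^sup>2"]
  show "(primitive_cosh_sin has_vector_derivative cosh s * sin (bb * s)) (at s within {a..c})"
    using one_plus_bb_sq_pos
    by (simp add: primitive_cosh_sin_def[abs_def] has_real_derivative_iff_has_vector_derivative[symmetric])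
qed

lemma integral_cosh_1m_sin:
  "a \<le> c \<Longrightarrow> integral {a..c} (\<lambda>s. cosh (1 - s) * sin (bb * s)) = primitive_cosh_1m_sin c - primitive_cosh_1m_sin a"
proof (rule integral_unique, rule fundamental_theorem_of_calculus)
  fix s
  have "((\<lambda>s. - sinh (1 - s) * sin (bb * s) - bb * cosh (1 - s) * cos (bb * s)) has_real_derivative
          (1 + bb\<^sup>2) * (cosh (1 - s) * sin (bb * s))) (at s within {a..c})"
    by (auto intro!: derivative_eq_intros simp: algebra_simps power2_eq_square)
  from DERIV_cdivide[OF this, of "1 + bb\<^sup>2"]
  show "(primitive_cosh_1m_sin has_vector_derivative cosh (1 - s) * sin (bb * s)) (at s within {a..c})"
    using one_plus_bb_sq_pos
    by (simp add: primitive_cosh_1m_sin_def[abs_def] has_real_derivative_iff_has_vector_derivative[symmetric])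
qed

lemma kern_eq_below: "s \<le> t \<Longrightarrow> kern t s = cosh (1 - t) * cosh s / sinh 1"
  by (cases "t \<le> s") (auto simp: kern_def)

lemma kern_eq_above: "t \<le> s \<Longrightarrow> kern t s = cosh t * cosh (1 - s) / sinh 1"
  by (simp add: kern_def mult.commute)

definition kern_sin_integral :: "real \<Rightarrow> real \<Rightarrow> real \<Rightarrow> real" where
  "kern_sin_integral a c t = integral {a..c} (\<lambda>s. kern t s * sin (3/2 * pi * s))"

lemma FF_eq: "FF r t = exp (-2*r) * kern_sin_integral 0 (2/3) t + exp (2*r) * kern_sin_integral (2/3) 1 t"
  by (simp add: FF_def kern_sin_integral_def)

lemma kern_sin_integral_below:
  assumes "a \<le> c" "c \<le> t"
  shows "kern_sin_integral a c t = cosh (1 - t) / sinh 1 * (primitive_cosh_sin c - primitive_cosh_sin a)"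
proof -
  have "kern_sin_integral a c t = integral {a..c} (\<lambda>s. cosh (1 - t) / sinh 1 * (cosh s * sin (bb * s)))"
    unfolding kern_sin_integral_def using assms
    by (intro integral_cong) (auto simp: kern_eq_below bb_def)
  then show ?thesis
    using integral_cosh_sin[OF assms(1)] by simp
qed

lemma kern_sin_integral_above:
  assumes "t \<le> a" "a \<le> c"
  shows "kern_sin_integral a c t = cosh t / sinh 1 * (primitive_cosh_1m_sin c - primitive_cosh_1m_sin a)"
proof -
  have "kern_sin_integral a c t = integral {a..c} (\<lambda>s. cosh t / sinh 1 * (cosh (1 - s) * sin (bb * s)))"
    unfolding kern_sin_integral_def using assms
    by (intro integral_cong) (auto simp: kern_eq_above bb_def)
  then show ?thesis
    using integral_cosh_1m_sin[OF assms(2)] by simp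
qed

lemma kern_sin_integral_split:
  assumes "a \<le> t" "t \<le> c"
  shows "kern_sin_integral a c t
    = cosh (1 - t) / sinh 1 * (primitive_cosh_sin t - primitive_cosh_sin a)
      + cosh t / sinh 1 * (primitive_cosh_1m_sin c - primitive_cosh_1m_sin t)"
proof -
  have "kern_sin_integral a c t = kern_sin_integral a t t + kern_sin_integral t c t"
    unfolding kern_sin_integral_def using assms
    by (intro Henstock_Kurzweil_Integration.integral_combine[symmetric] integrable_continuous_interval
        continuous_intros continuous_on_kern)
  then show ?thesis
    using assms by (simp add: kern_sin_integral_below kern_sin_integral_above)
qed

lemma sin_cos_bb: "sin (bb * (2/3)) = 0" "cos (bb * (2/3)) = -1" "sin bb = -1" "cos bb = 0"
proof -
  show "sin (bb * (2/3)) = 0" "cos (bb * (2/3)) = -1"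
    by (simp_all add: bb_def)
  have bb: "bb = pi/2 + pi"
    by (simp add: bb_def)
  show "sin bb = -1"
    by (simp only: bb sin_periodic_pi sin_pi_half)
  show "cos bb = 0"
    by (simp only: bb cos_periodic_pi cos_pi_half minus_zero)
qed

lemma primitive_values:
  "primitive_cosh_sin 0 = - bb / (1 + bb\<^sup>2)"
  "primitive_cosh_sin (2/3) = bb * cosh (2/3) / (1 + bb\<^sup>2)"
  "primitive_cosh_1m_sin (2/3) = bb * cosh (1/3) / (1 + bb\<^sup>2)"
  "primitive_cosh_1m_sin 1 = 0"
  unfolding primitive_cosh_sin_def primitive_cosh_1m_sin_def mult_1_right sin_cos_bb by simp_all

lemma sinh_1_split: "sinh 1 = sinh t * cosh (1 - t) + cosh t * sinh (1 - t)" for t :: real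
  using sinh_add[of t "1 - t"] by simp

lemma FF_below_23:
  assumes t: "t \<in> {0..2/3}"
  shows "FF r t = exp (-2*r) * AA t + exp (2*r) * BB t"
proof -
  define S where "S = sinh (1::real)"
  define D where "D = 1 + bb\<^sup>2"
  have SD: "S \<noteq> 0" "D \<noteq> 0"
    using one_plus_bb_sq_pos by (auto simp: S_def D_def)
  have "kern_sin_integral 0 (2/3) t
      = (cosh (1 - t) * (sinh t * sin (bb*t) - bb * cosh t * cos (bb*t) + bb)
         + cosh t * (bb * cosh (1/3) + sinh (1 - t) * sin (bb*t) + bb * cosh (1 - t) * cos (bb*t))) / (D * S)"
    using t SD by (simp add: kern_sin_integral_split primitive_values)
      (simp add: primitive_cosh_sin_def primitive_cosh_1m_sin_def field_simps flip: S_def D_def)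
  also have "\<dots> = (sin (bb*t) * S + bb * (cosh (1 - t) + cosh (1/3) * cosh t)) / (D * S)"
    unfolding S_def sinh_1_split[of t] by (simp add: algebra_simps)
  also have "\<dots> = AA t"
    using SD by (simp add: AA_def qq_def field_simps flip: S_def D_def)
  finally have "kern_sin_integral 0 (2/3) t = AA t" .
  moreover have "kern_sin_integral (2/3) 1 t = BB t"
    using t SD by (simp add: kern_sin_integral_above primitive_values BB_def qq_def field_simps flip: S_def D_def)
  ultimately show ?thesis
    by (simp add: FF_eq)
qed

lemma FF_above_23:
  assumes t: "t \<in> {2/3..1}"
  shows "FF r t = exp (-2*r) * CC t + exp (2*r) * DD t"
proof -
  define S where "S = sinh (1::real)"
  define D where "D = 1 + bb\<^sup>2"
  have SD: "S \<noteq> 0" "D \<noteq> 0"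
    using one_plus_bb_sq_pos by (auto simp: S_def D_def)
  have "kern_sin_integral 0 (2/3) t = CC t"
    using t SD by (simp add: kern_sin_integral_below primitive_values CC_def qq_def field_simps flip: S_def D_def)
  moreover have "kern_sin_integral (2/3) 1 t
      = (cosh (1 - t) * (sinh t * sin (bb*t) - bb * cosh t * cos (bb*t) - bb * cosh (2/3))
         + cosh t * (sinh (1 - t) * sin (bb*t) + bb * cosh (1 - t) * cos (bb*t))) / (D * S)"
    using t SD by (simp add: kern_sin_integral_split primitive_values)
      (simp add: primitive_cosh_sin_def primitive_cosh_1m_sin_def field_simps flip: S_def D_def)
  moreover have "\<dots> = (S * sin (bb*t) - bb * cosh (2/3) * cosh (1 - t)) / (D * S)"
    unfolding S_def sinh_1_split[of t] by (simp add: algebra_simps)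
  moreover have "\<dots> = DD t"
    using SD by (simp add: DD_def qq_def field_simps flip: S_def D_def)
  ultimately show ?thesis
    by (simp add: FF_eq)
qed

lemma qq_pos: "qq > 0"
  using one_plus_bb_sq_pos by (simp add: qq_def)

lemma BB_neg: "BB t < 0"
  using qq_pos bb_pos by (simp add: BB_def)

lemma AA_0_pos: "AA 0 > 0"
  using qq_pos bb_pos by (simp add: AA_def add_pos_pos)

lemma CC_pos: "CC t > 0"
  using qq_pos bb_pos by (simp add: CC_def add_pos_pos)

lemma DD_neg:
  assumes "t \<in> {2/3..1}"
  shows "DD t < 0"
proof -
  have "sinh 1 * sin (bb * t) \<le> 0"
    using sin_nonpos_23_1[OF assms] by (simp add: bb_def mult_nonneg_nonpos)
  moreover have "bb * cosh (2/3) * cosh (1 - t) > 0"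
    using bb_pos by simp
  ultimately show ?thesis
    using qq_pos by (simp add: DD_def mult_pos_neg)
qed

lemma pos_if_exp_lt_ratio:
  fixes A B r :: real
  assumes B: "B < 0" and q: "exp (4*r) < - A / B"
  shows "exp (-2*r) * A + exp (2*r) * B > 0"
proof -
  have "exp (4*r) * (- B) < A"
    using mult_strict_right_mono[OF q, of "- B"] B by simp
  then have "0 < exp (-2*r) * (A + exp (4*r) * B)"
    by simp
  moreover have "exp (-2*r) * exp (4*r) = exp (2*r)"
    by (simp flip: exp_add)
  ultimately show ?thesis
    by (simp add: algebra_simps)
qed

lemma exp_lt_SUP_ratio:
  fixes f g :: "real \<Rightarrow> real"
  assumes ab: "a \<le> b" and cf: "continuous_on {a..b} f" and cg: "continuous_on {a..b} g"
    and g_neg: "\<And>t. t \<in> {a..b} \<Longrightarrow> g t < 0" and x: "x \<in> {a..b}" "- f x / g x > 0"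
    and r: "r < ln (SUP t\<in>{a..b}. - f t / g t) / 4"
  obtains t where "t \<in> {a..b}" and "exp (4*r) < - f t / g t"
proof -
  have "continuous_on {a..b} (\<lambda>t. - f t / g t)"
    using g_neg by (intro continuous_intros cf cg) fastforce
  then have bdd: "bdd_above ((\<lambda>t. - f t / g t) ` {a..b})"
    by (intro compact_imp_bounded[THEN bounded_imp_bdd_above] compact_continuous_image) auto
  define S where "S = (SUP t\<in>{a..b}. - f t / g t)"
  have "- f x / g x \<le> S"
    unfolding S_def by (rule cSUP_upper[OF x(1) bdd])
  then have S_pos: "S > 0"
    using x(2) by linarith
  have "4*r < ln S"
    using r by (simp add: S_def)
  then have "exp (4*r) < S"
    using S_pos by (metis exp_less_cancel_iff exp_ln)
  then show thesis
    using that less_cSUP_iff[OF _ bdd] ab unfolding S_def by auto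
qed

lemma FF_pos_somewhere:
  assumes "\<rho> < rho0"
  obtains t0 where "t0 \<in> {0..1}" and "FF \<rho> t0 > 0"
proof (cases "\<rho> < rho1")
  case True
  obtain t where t: "t \<in> {0..2/3}" and "exp (4*\<rho>) < - AA t / BB t"
  proof (rule exp_lt_SUP_ratio[where x=0])
    show "continuous_on {0..2/3} AA" "continuous_on {0..2/3} BB"
      unfolding AA_def[abs_def] BB_def[abs_def] by (auto intro!: continuous_intros)
    show "- AA 0 / BB 0 > 0"
      using AA_0_pos BB_neg[of 0] by (simp add: divide_pos_neg)
  qed (use True BB_neg in \<open>auto simp: rho1_def\<close>)
  then have "FF \<rho> t > 0"
    using FF_below_23[OF t] pos_if_exp_lt_ratio[OF BB_neg] by simp
  with t show thesis by (intro that) auto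
next
  case False
  obtain t where t: "t \<in> {2/3..1}" and "exp (4*\<rho>) < - CC t / DD t"
  proof (rule exp_lt_SUP_ratio[where x=1])
    show "continuous_on {2/3..1} CC" "continuous_on {2/3..1} DD"
      unfolding CC_def[abs_def] DD_def[abs_def] by (auto intro!: continuous_intros)
    show "- CC 1 / DD 1 > 0"
      using CC_pos[of 1] DD_neg[of 1] by (simp add: divide_pos_neg)
  qed (use False assms DD_neg in \<open>auto simp: rho0_def rho2_def\<close>)
  then have "FF \<rho> t > 0"
    using FF_above_23[OF t] pos_if_exp_lt_ratio[OF DD_neg[OF t]] by simp
  with t show thesis by (intro that) auto
qed

theorem mainTheorem2:
  fixes \<rho> :: real
  assumes "0 < \<rho>" and "\<rho> < rho0"
  shows "(\<exists>lp lm :: real. \<exists>up um :: real \<Rightarrow> real.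
            lp > 0 \<and> lm < 0 \<and>
            continuous_on {0..1} up \<and> continuous_on {0..1} um \<and>
            supnorm up = \<rho> \<and> supnorm um = \<rho> \<and>
            solves lp up \<and> solves lm um)
       \<and> (\<forall>lam (u :: real \<Rightarrow> real). continuous_on {0..1} u \<and> supnorm u = \<rho> \<and> solves lam u
            \<longrightarrow> \<bar>lam\<bar> \<le> \<rho> / (SUP t\<in>{0..1}. FF \<rho> t))"
proof
  obtain t0 where t0: "t0 \<in> {0..1}" "FF \<rho> t0 > 0"
    using FF_pos_somewhere[OF assms(2)] .
  obtain up where up: "up \<in> cont_ball \<rho>" "supnorm up = \<rho>" "supnorm (green_op up) > 0"
    and sol_p: "solves (1 * \<rho> / supnorm (green_op up)) up"
    using exists_solution[OF assms(1) t0, of 1] by auto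
  obtain um where um: "um \<in> cont_ball \<rho>" "supnorm um = \<rho>" "supnorm (green_op um) > 0"
    and sol_m: "solves (-1 * \<rho> / supnorm (green_op um)) um"
    using exists_solution[OF assms(1) t0, of "-1"] by auto
  show "\<exists>lp lm :: real. \<exists>up um :: real \<Rightarrow> real. lp > 0 \<and> lm < 0 \<and>
      continuous_on {0..1} up \<and> continuous_on {0..1} um \<and>
      supnorm up = \<rho> \<and> supnorm um = \<rho> \<and> solves lp up \<and> solves lm um"
    using up um sol_p sol_m assms(1) cont_ballD(1)
    by (intro exI[of _ "\<rho> / supnorm (green_op up)"] exI[of _ "- \<rho> / supnorm (green_op um)"] exI[of _ up] exI[of _ um])
      (auto simp: divide_neg_pos)
  show "\<forall>lam u. continuous_on {0..1} u \<and> supnorm u = \<rho> \<and> solves lam u \<longrightarrow> \<bar>lam\<bar> \<le> \<rho> / (SUP t\<in>{0..1}. FF \<rho> t)"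
    using eigenvalue_bound[OF assms(1) t0] by blast
qed

end
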